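(* Let $G$ be a finite group that is not of prime power order, and suppose there exists an element $x\in G$ of prime order $p$ such that the centralizer $C_G(x)$ is a $p$-group. Then the cyclic graph $\Delta(G)$ is disconnected.
   Context: For a finite group $G$, the cyclic graph $\Delta(G)$ has vertex set $G^{\#}=G\setminus\{1\}$, and distinct vertices $x,y$ are adjacent if and only if the subgroup $\langle x,y\rangle$ is cyclic. *)

theory Defs
  imports "HOL-Algebra.Algebra"
begin

definition centralizer_el :: "('a, 'b) monoid_scheme \<Rightarrow> 'a \<Rightarrow> 'a set" where
  "centralizer_el G x = {g \<in> carrier G. g \<otimes>\<^bsub>G\<^esub> x = x \<otimes>\<^bsub>G\<^esub> g}"

definition cyc_vertices :: "('a, 'b) monoid_scheme \<Rightarrow> 'a set" where
  "cyc_vertices G = carrier G - {\<one>\<^bsub>G\<^esub>}"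

definition cyc_adj :: "('a, 'b) monoid_scheme \<Rightarrow> 'a \<Rightarrow> 'a \<Rightarrow> bool" where
  "cyc_adj G x y \<longleftrightarrow> x \<in> cyc_vertices G \<and> y \<in> cyc_vertices G \<and> x \<noteq> y \<and>
     cyclic_group (subgroup_generated G {x, y})"

definition cyc_graph_connected :: "('a, 'b) monoid_scheme \<Rightarrow> bool" where
  "cyc_graph_connected G \<longleftrightarrow>
     (\<forall>x \<in> cyc_vertices G. \<forall>y \<in> cyc_vertices G. (cyc_adj G)\<^sup>*\<^sup>* x y)"

definition prime_power_order :: "('a, 'b) monoid_scheme \<Rightarrow> bool" where
  "prime_power_order G \<longleftrightarrow> (\<exists>q k. Factorial_Ring.prime (q::nat) \<and> order G = q ^ k)"

end

theory Submission
  imports Defs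
begin

(* The vertices reachable from x in the cyclic graph all have x as a power. Indeed, if
   x is a power of y and <y, z> is cyclic, then z commutes with x, so z lies in the
   p-group C_G(x) and has order p^e with e > 0; in the cyclic group <y, z> the unique
   subgroup of order p is then contained in <z>, so x is a power of z as well. An element
   of prime order q \<noteq> p, which exists because |G| is not a power of p, would then
   centralize x, contradicting that C_G(x) is a p-group. *)

lemma prime_factor_ne_if_not_prime_power:
  fixes n p :: nat
  assumes "Factorial_Ring.prime p" "n > 0" "\<And>k. n \<noteq> p ^ k"
  obtains q where "Factorial_Ring.prime q" "q dvd n" "q \<noteq> p"
proof -
  obtain k m where m: "\<not> p dvd m" "n = m * p ^ k"
    using prime_power_canonical[OF assms(1,2)] by blast
  then have "m \<noteq> 1"
    using assms(3)[of k] by auto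
  then obtain q where "Factorial_Ring.prime q" "q dvd m"
    using prime_factor_nat by blast
  then show ?thesis
    using that m by (metis dvd_mult2)
qed

lemma dvd_of_div_dvd_div:
  fixes n d e :: nat
  assumes "n > 0" "d dvd n" "e dvd n" "n div d dvd n div e"
  shows "e dvd d"
proof -
  have "d \<noteq> 0"
    using assms(1,2) by auto
  then have "n dvd (n div e) * d"
    using assms(2,4) div_dvd_iff_mult by blast
  then have "(n div e) * e dvd (n div e) * d"
    using assms(3) by simp
  moreover have "n div e \<noteq> 0"
    using assms(1,3) by (simp add: dvd_div_eq_0_iff)
  ultimately show ?thesis
    by simp
qed

context group
begin

lemma ord_dvd_card_subgroup:
  assumes "subgroup H G" "u \<in> H"
  shows "ord u dvd card H"
proof -
  interpret H: group "G\<lparr>carrier := H\<rparr>"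
    using subgroup_imp_group assms(1) .
  have "u [^]\<^bsub>G\<lparr>carrier := H\<rparr>\<^esub> n = u [^] n" for n :: nat
    by (induction n) auto
  then have "H.ord u = ord u"
    unfolding ord_def H.ord_def by simp
  then show ?thesis
    using H.ord_dvd_group_order[of u] assms(2) by (simp add: order_def)
qed

lemma exists_ord_eq_prime:
  assumes "finite (carrier G)" "Factorial_Ring.prime q" "q dvd order G"
  obtains u where "u \<in> carrier G" "ord u = q"
proof -
  obtain m where "order G = q * m"
    using assms(3) ..
  then have "order G = q ^ 1 * m"
    by simp
  from sylow_thm[OF assms(2) is_group this assms(1)]
  obtain H where H: "subgroup H G" "card H = q ^ 1"
    by blast
  have card_H: "card H = q"
    using H(2) by simp
  then have "H \<noteq> {\<one>}"
    using prime_gt_1_nat[OF assms(2)] by auto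
  then obtain u where u: "u \<in> H" "u \<noteq> \<one>"
    using subgroup.one_closed[OF H(1)] by auto
  have u_carrier: "u \<in> carrier G"
    using subgroup.mem_carrier[OF H(1) u(1)] .
  have "ord u dvd q" "ord u \<noteq> 1"
    using ord_dvd_card_subgroup[OF H(1) u(1)] card_H ord_eq_1[OF u_carrier] u(2) by auto
  then have "ord u = q"
    using assms(2) prime_nat_iff by blast
  with u_carrier show ?thesis
    by (rule that)
qed

lemma centralizer_el_subgroup:
  assumes x: "x \<in> carrier G"
  shows "subgroup (centralizer_el G x) G"
proof (rule subgroupI)
  show "centralizer_el G x \<subseteq> carrier G" "centralizer_el G x \<noteq> {}"
    using x unfolding centralizer_el_def by auto
next
  fix a assume "a \<in> centralizer_el G x"
  then have a: "a \<in> carrier G" "a \<otimes> x = x \<otimes> a"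
    unfolding centralizer_el_def by auto
  have "inv a \<otimes> x = inv a \<otimes> x \<otimes> a \<otimes> inv a"
    using a(1) x by (simp add: m_assoc)
  also have "\<dots> = inv a \<otimes> (a \<otimes> x) \<otimes> inv a"
    using a x by (simp add: m_assoc)
  also have "\<dots> = x \<otimes> inv a"
    using a(1) x by (simp flip: m_assoc)
  finally show "inv a \<in> centralizer_el G x"
    using a unfolding centralizer_el_def by auto
next
  fix a b assume "a \<in> centralizer_el G x" "b \<in> centralizer_el G x"
  then show "a \<otimes> b \<in> centralizer_el G x"
    using x unfolding centralizer_el_def by (auto simp: m_assoc) (metis m_assoc)
qed

lemma ord_dvd_card_centralizer_el:
  assumes "x \<in> carrier G" "y \<in> centralizer_el G x"
  shows "ord y dvd card (centralizer_el G x)"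
  using ord_dvd_card_subgroup[OF centralizer_el_subgroup[OF assms(1)] assms(2)] .

lemma pow_mem_centralizer_el_pow:
  assumes "g \<in> carrier G"
  shows "g [^] (m :: nat) \<in> centralizer_el G (g [^] (n :: nat))"
  using assms unfolding centralizer_el_def by (simp add: nat_pow_mult add.commute)

lemma cyclic_subgroup_generated_elems_pow:
  assumes "finite (carrier G)" "S \<subseteq> carrier G" "cyclic_group (subgroup_generated G S)"
  obtains g where "g \<in> carrier G" "\<And>s. s \<in> S \<Longrightarrow> \<exists>n :: nat. s = g [^] n"
proof -
  let ?H = "subgroup_generated G S"
  obtain g where g: "g \<in> carrier ?H" and H: "carrier ?H = range (\<lambda>i :: int. g [^]\<^bsub>?H\<^esub> i)"
    using assms(3) group.cyclic_group[OF group_subgroup_generated] by blast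
  have gG: "g \<in> carrier G"
    using g carrier_subgroup_generated_subset by blast
  have "s \<in> generate G {g}" if "s \<in> S" for s
  proof -
    have "s \<in> carrier ?H"
      using that assms(2) subgroup_generated_subset_carrier_subset by blast
    then show ?thesis
      unfolding H generate_pow[OF gG] int_pow_subgroup_generated[OF g] by blast
  qed
  then show ?thesis
    using that gG generate_pow_on_finite_carrier[OF assms(1) gG] by blast
qed

lemma pow_eq_pow_pow_if_ord_dvd:
  assumes fin: "finite (carrier G)" and g: "g \<in> carrier G"
    and dvd: "ord (g [^] (a :: nat)) dvd ord (g [^] (b :: nat))"
  obtains t :: nat where "(g [^] b) [^] t = g [^] a"
proof (cases "a = 0 \<or> b = 0")
  case True
  then have "g [^] a = \<one>"
    using dvd ord_eq_1 g by auto
  then show ?thesis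
    using that[of 0] by simp
next
  case False
  define N where "N = ord g"
  have N: "N > 0"
    using ord_ge_1[OF fin g] N_def by simp
  have "N div gcd N a dvd N div gcd N b"
    using dvd False ord_pow_gen[OF g] N_def by simp
  then have "gcd N b dvd gcd N a"
    using dvd_of_div_dvd_div[OF N gcd_dvd1 gcd_dvd1] by blast
  then have "gcd N b dvd a"
    by (meson dvd_trans gcd_dvd2)
  then obtain c where c: "a = gcd N b * c" ..
  obtain u v where uv: "b * u = N * v + gcd b N"
    using bezout_nat False by blast
  have "b * u * c = N * (v * c) + a"
    using uv c by (simp add: gcd.commute algebra_simps)
  then have "(g [^] b) [^] (u * c) = g [^] (N * (v * c) + a)"
    using g by (simp add: nat_pow_pow mult.assoc)
  also have "\<dots> = g [^] a"
    using g N_def by (simp add: nat_pow_mult[symmetric] nat_pow_pow[symmetric])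
  finally show ?thesis
    using that by blast
qed

lemma cyc_adj_pow_eq:
  assumes fin: "finite (carrier G)" and p: "Factorial_Ring.prime p" and ord_x: "ord x = p"
    and centralizer: "card (centralizer_el G x) = p ^ k"
    and root: "y [^] (n :: nat) = x" and adj: "cyc_adj G y z"
  obtains m :: nat where "z [^] m = x"
proof -
  have yz: "y \<in> carrier G" "z \<in> carrier G" "z \<noteq> \<one>"
    and cyclic: "cyclic_group (subgroup_generated G {y, z})"
    using adj unfolding cyc_adj_def cyc_vertices_def by auto
  have "{y, z} \<subseteq> carrier G"
    using yz by simp
  then obtain g where g: "g \<in> carrier G" and powers: "\<And>s. s \<in> {y, z} \<Longrightarrow> \<exists>n :: nat. s = g [^] n"
    using cyclic_subgroup_generated_elems_pow[OF fin _ cyclic] by blast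
  obtain a b :: nat where a: "y = g [^] a" and b: "z = g [^] b"
    using powers by blast
  have x: "x = g [^] (a * n)"
    using root a g by (simp add: nat_pow_pow)
  have x_carrier: "x \<in> carrier G"
    using x g by simp
  have "z \<in> centralizer_el G x"
    using pow_mem_centralizer_el_pow[OF g] x b by simp
  then have "ord z dvd p ^ k"
    using ord_dvd_card_centralizer_el[OF x_carrier] centralizer by metis
  then obtain e where e: "ord z = p ^ e"
    using divides_primepow_nat[OF p] by blast
  have "e \<noteq> 0"
    using e ord_eq_1[OF yz(2)] yz(3) by auto
  then have "ord x dvd ord z"
    using e ord_x by simp
  then obtain t :: nat where "(g [^] b) [^] t = g [^] (a * n)"
    using pow_eq_pow_pow_if_ord_dvd[OF fin g] x b by metis
  with x b show ?thesis
    using that by metis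
qed

lemma cyc_reachable_pow_eq:
  assumes fin: "finite (carrier G)" and x: "x \<in> carrier G"
    and p: "Factorial_Ring.prime p" and ord_x: "ord x = p"
    and centralizer: "card (centralizer_el G x) = p ^ k"
    and path: "(cyc_adj G)\<^sup>*\<^sup>* x y"
  shows "\<exists>n :: nat. y [^] n = x"
  using path
proof (induction rule: rtranclp_induct)
  case base
  show ?case
    using x by (metis nat_pow_eone)
next
  case (step y z)
  then show ?case
    using cyc_adj_pow_eq[OF fin p ord_x centralizer] by metis
qed

end

theorem lemma3p3:
  fixes G (structure) and x :: 'a and p :: nat
  assumes "group G" and "finite (carrier G)"
    and "\<not> prime_power_order G"
    and "x \<in> carrier G" and "Factorial_Ring.prime p" and "group.ord G x = p"
    and "\<exists>k. card (centralizer_el G x) = p ^ k"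
  shows "\<not> cyc_graph_connected G"
proof
  assume connected: "cyc_graph_connected G"
  interpret group G by fact
  obtain k where centralizer: "card (centralizer_el G x) = p ^ k"
    using assms(7) by blast
  have "order G > 0"
    using assms(2) by (simp add: order_gt_0_iff_finite)
  moreover have "\<And>k. order G \<noteq> p ^ k"
    using assms(3,5) unfolding prime_power_order_def by blast
  ultimately obtain q where q: "Factorial_Ring.prime q" "q dvd order G" "q \<noteq> p"
    by (rule prime_factor_ne_if_not_prime_power[OF assms(5)])
  obtain u where u: "u \<in> carrier G" "ord u = q"
    using exists_ord_eq_prime[OF assms(2) q(1,2)] .
  have "x \<in> cyc_vertices G" "u \<in> cyc_vertices G"
    using assms(4,5,6) u q(1) ord_eq_1 unfolding cyc_vertices_def by auto
  then obtain n :: nat where "u [^] n = x"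
    using connected cyc_reachable_pow_eq[OF assms(2,4,5,6) centralizer]
    unfolding cyc_graph_connected_def by blast
  then have "u \<in> centralizer_el G x"
    using pow_mem_centralizer_el_pow[OF u(1), of 1 n] u(1) by simp
  then have "q dvd p ^ k"
    using ord_dvd_card_centralizer_el[OF assms(4)] centralizer u(2) by metis
  then have "q dvd p"
    using prime_dvd_power[OF q(1)] by blast
  then show False
    using q(1,3) assms(5) primes_dvd_imp_eq by blast
qed

end
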